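(* In the setting described in the context, for every $j\in[\varepsilon^{-1}-1]$ and every $i\in I$ it holds that $\lambda^j_i\le1$ and $\gamma^j_i\le1$.
   Context: A CMK instance is $\mathcal{I}=(I,w,v,m,k)$ with $I$ a finite item set, $w:I\to[0,1]$, $v:I\to\mathbb{R}_{\ge0}$, $m,k\in\mathbb{N}_{>0}$. A configuration is $C\subseteq I$ with $|C|\le k$ and $\sum_{i\in C}w(i)\le1$; $\mathcal{C}$ is the set of configurations and $\mathcal{C}(i)=\{C\in\mathcal{C}:i\in C\}$. A solution is a tuple of $m$ configurations, with value $v$ of their union; $\mathrm{OPT}(\mathcal{I})$ is the maximum value. A fractional solution is $x\in\mathbb{R}_{\ge0}^{\mathcal{C}}$, with $\mathrm{cover}_i(x)=\sum_{C\in\mathcal{C}(i)}x_C$, $\|x\|=\sum_Cx_C$; it is feasible if $\mathrm{cover}(x)\in[0,1]^I$; for $y\in\mathbb{R}^I$, $v(y)=\sum_iy_iv(i)$, and $v(x)=v(\mathrm{cover}(x))$. For $S\subseteq I$ and $\ell\in\mathbb{N}$, $\mathrm{LP}(S,\ell)$ is: maximize $v(x)$ over feasible fractional solutions $x$ with $x_C=0$ whenever $C\not\subseteq S$, and $\|x\|=\ell$. For $\|x\|\ne0$, a random configuration $R$ is distributed by $x$ ($R\sim x$) if $\Pr(R=C)=x_C/\|x\|$. Given $\varepsilon\in(0,0.1)$, $\mathcal{I}$ is $\varepsilon$-simple if $m>\exp(\exp(\varepsilon^{-30}))$ and $\varepsilon m\in\mathbb{N}$. Iterative randomized rounding: let $\varepsilon\in(0,0.1)$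 with $\varepsilon^{-1/2}\in\mathbb{N}$ and $\mathcal{I}$ be $\varepsilon$-simple; let $q=\varepsilon m$ and $S_0=I$. For $j=1,\dots,\varepsilon^{-1}$: let $m_j=m(1-(j-1)\varepsilon)$; let $x^j$ be a $(1-\varepsilon)$-approximate solution of $\mathrm{LP}(S_{j-1},m_j)$ (a feasible solution of value at least $(1-\varepsilon)$ times its optimum), determined by the outcomes of the samples of previous iterations; sample independently $R^j_1,\dots,R^j_q\sim x^j$; set $S_j=S_{j-1}\setminus\bigcup_{b=1}^qR^j_b$. Let $\mathcal{F}_0$ be the trivial $\sigma$-algebra and $\mathcal{F}_j$ the $\sigma$-algebra generated by $\{R^{j'}_b: j'\le j,\ b\in[q]\}$. Fix an optimal solution $(C^*_1,\dots,C^*_m)$ and let $S^*=\bigcup_bC^*_b$ (so $v(S^* )=\mathrm{OPT}(\mathcal{I})$). Define $\gamma^0=\mathbb{1}_{S^*}\in\{0,1\}^I$ (indicator vector of $S^*$). For $j=1,\dots,\varepsilon^{-1}-1$ define $\lambda^j\in\mathbb{R}^I_{\ge0}$ by $\lambda^j_i=\frac{1-j\varepsilon}{1-(j-1)\varepsilon}\cdot\frac{1}{\Pr(i\in S_j\mid\mathcal{F}_{j-1})}\cdot\gamma^{j-1}_i$ for $i\in S_{j-1}$ (this conditional probability is positive for such $i$) and $\lambda^j_i=0$ for $i\notin S_{j-1}$; and define $\gamma^j_i=\mathbb{1}_{i\in S_j}\cdot\lambda^j_i$ for all $i\in I$. *)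

theory Defs
  imports "HOL-Probability.Probability"
begin

definition is_config :: "'a set \<Rightarrow> ('a \<Rightarrow> real) \<Rightarrow> nat \<Rightarrow> 'a set \<Rightarrow> bool" where
  "is_config I w k C \<longleftrightarrow> C \<subseteq> I \<and> card C \<le> k \<and> (\<Sum>i\<in>C. w i) \<le> 1"

definition configs :: "'a set \<Rightarrow> ('a \<Rightarrow> real) \<Rightarrow> nat \<Rightarrow> 'a set set" where
  "configs I w k = {C. is_config I w k C}"

definition is_solution :: "'a set \<Rightarrow> ('a \<Rightarrow> real) \<Rightarrow> nat \<Rightarrow> nat \<Rightarrow> 'a set list \<Rightarrow> bool" where
  "is_solution I w k m Cs \<longleftrightarrow> length Cs = m \<and> (\<forall>C\<in>set Cs. is_config I w k C)"

definition setval :: "('a \<Rightarrow> real) \<Rightarrow> 'a set \<Rightarrow> real" where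
  "setval v S = (\<Sum>i\<in>S. v i)"

definition is_optimal_solution ::
  "'a set \<Rightarrow> ('a \<Rightarrow> real) \<Rightarrow> ('a \<Rightarrow> real) \<Rightarrow> nat \<Rightarrow> nat \<Rightarrow> 'a set list \<Rightarrow> bool" where
  "is_optimal_solution I w v m k Cs \<longleftrightarrow> is_solution I w k m Cs \<and>
     (\<forall>Ds. is_solution I w k m Ds \<longrightarrow> setval v (\<Union>(set Ds)) \<le> setval v (\<Union>(set Cs)))"

definition cover :: "'a set \<Rightarrow> ('a \<Rightarrow> real) \<Rightarrow> nat \<Rightarrow> ('a set \<Rightarrow> real) \<Rightarrow> 'a \<Rightarrow> real" where
  "cover I w k x i = (\<Sum>C\<in>{C\<in>configs I w k. i \<in> C}. x C)"

definition fnorm :: "'a set \<Rightarrow> ('a \<Rightarrow> real) \<Rightarrow> nat \<Rightarrow> ('a set \<Rightarrow> real) \<Rightarrow> real" where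
  "fnorm I w k x = (\<Sum>C\<in>configs I w k. x C)"

definition is_frac_solution :: "'a set \<Rightarrow> ('a \<Rightarrow> real) \<Rightarrow> nat \<Rightarrow> ('a set \<Rightarrow> real) \<Rightarrow> bool" where
  "is_frac_solution I w k x \<longleftrightarrow> (\<forall>C. x C \<ge> 0) \<and> (\<forall>C. C \<notin> configs I w k \<longrightarrow> x C = 0)"

definition feasible_frac :: "'a set \<Rightarrow> ('a \<Rightarrow> real) \<Rightarrow> nat \<Rightarrow> ('a set \<Rightarrow> real) \<Rightarrow> bool" where
  "feasible_frac I w k x \<longleftrightarrow> is_frac_solution I w k x \<and> (\<forall>i\<in>I. cover I w k x i \<le> 1)"

definition vecval :: "'a set \<Rightarrow> ('a \<Rightarrow> real) \<Rightarrow> ('a \<Rightarrow> real) \<Rightarrow> real" where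
  "vecval I v y = (\<Sum>i\<in>I. y i * v i)"

definition fracval :: "'a set \<Rightarrow> ('a \<Rightarrow> real) \<Rightarrow> ('a \<Rightarrow> real) \<Rightarrow> nat \<Rightarrow> ('a set \<Rightarrow> real) \<Rightarrow> real" where
  "fracval I w v k x = vecval I v (cover I w k x)"

definition LP_feasible ::
  "'a set \<Rightarrow> ('a \<Rightarrow> real) \<Rightarrow> nat \<Rightarrow> 'a set \<Rightarrow> real \<Rightarrow> ('a set \<Rightarrow> real) \<Rightarrow> bool" where
  "LP_feasible I w k S l x \<longleftrightarrow> feasible_frac I w k x \<and> (\<forall>C. \<not> C \<subseteq> S \<longrightarrow> x C = 0)
      \<and> fnorm I w k x = l"

definition LP_opt ::
  "'a set \<Rightarrow> ('a \<Rightarrow> real) \<Rightarrow> ('a \<Rightarrow> real) \<Rightarrow> nat \<Rightarrow> 'a set \<Rightarrow> real \<Rightarrow> real" where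
  "LP_opt I w v k S l = (SUP x\<in>{x. LP_feasible I w k S l x}. fracval I w v k x)"

definition LP_approx ::
  "real \<Rightarrow> 'a set \<Rightarrow> ('a \<Rightarrow> real) \<Rightarrow> ('a \<Rightarrow> real) \<Rightarrow> nat \<Rightarrow> 'a set \<Rightarrow> real \<Rightarrow> ('a set \<Rightarrow> real) \<Rightarrow> bool" where
  "LP_approx eps I w v k S l x \<longleftrightarrow> LP_feasible I w k S l x \<and>
      fracval I w v k x \<ge> (1 - eps) * LP_opt I w v k S l"

definition config_pmf :: "'a set \<Rightarrow> ('a \<Rightarrow> real) \<Rightarrow> nat \<Rightarrow> ('a set \<Rightarrow> real) \<Rightarrow> 'a set pmf" where
  "config_pmf I w k x = embed_pmf (\<lambda>C. x C / fnorm I w k x)"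

fun iid_samples :: "nat \<Rightarrow> 'b pmf \<Rightarrow> 'b list pmf" where
  "iid_samples 0 p = return_pmf []"
| "iid_samples (Suc n) p = bind_pmf p (\<lambda>C. map_pmf (\<lambda>Cs. C # Cs) (iid_samples n p))"

text \<open>A history of j rounds is a list h of j rounds; round j' (1-based) is h ! (j'-1),
  the list of samples R^{j'}_1..R^{j'}_q. The remaining set after the rounds in h.\<close>
definition remaining :: "'a set \<Rightarrow> 'a set list list \<Rightarrow> 'a set" where
  "remaining I h = I - (\<Union>r\<in>set h. \<Union>(set r))"

text \<open>A history lies in the support of the process: every round has q samples and every
  sample of round j'+1 has positive weight in x^{j'+1} = X (take j' h).\<close>
definition reachable :: "('a set list list \<Rightarrow> 'a set \<Rightarrow> real) \<Rightarrow> nat \<Rightarrow> 'a set list list \<Rightarrow> bool" where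
  "reachable X q h \<longleftrightarrow> (\<forall>j'<length h. length (h ! j') = q \<and> (\<forall>C\<in>set (h ! j'). X (take j' h) C > 0))"

text \<open>Pr(i \<in> S_j | F_{j-1}), evaluated at the outcome h (of which only the first j-1
  rounds matter): probability over the fresh samples R^j_1..R^j_q \<sim> x^j = X (take (j-1) h).\<close>
definition surv_prob ::
  "'a set \<Rightarrow> ('a \<Rightarrow> real) \<Rightarrow> nat \<Rightarrow> nat \<Rightarrow> ('a set list list \<Rightarrow> 'a set \<Rightarrow> real) \<Rightarrow> nat
    \<Rightarrow> 'a set list list \<Rightarrow> 'a \<Rightarrow> real" where
  "surv_prob I w k q X j h i =
     measure_pmf.prob (iid_samples q (config_pmf I w k (X (take (j - 1) h))))
       {Rs. i \<in> remaining I (take (j - 1) h) - \<Union>(set Rs)}"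

definition lam ::
  "real \<Rightarrow> 'a set \<Rightarrow> ('a \<Rightarrow> real) \<Rightarrow> nat \<Rightarrow> nat \<Rightarrow> ('a set list list \<Rightarrow> 'a set \<Rightarrow> real) \<Rightarrow> nat
    \<Rightarrow> 'a set list list \<Rightarrow> ('a \<Rightarrow> real) \<Rightarrow> 'a \<Rightarrow> real" where
  "lam eps I w k q X j h g i =
     (if i \<in> remaining I (take (j - 1) h)
      then (1 - real j * eps) / (1 - (real j - 1) * eps) * (1 / surv_prob I w k q X j h i) * g i
      else 0)"

fun gam ::
  "real \<Rightarrow> 'a set \<Rightarrow> ('a \<Rightarrow> real) \<Rightarrow> nat \<Rightarrow> nat \<Rightarrow> ('a set list list \<Rightarrow> 'a set \<Rightarrow> real)
    \<Rightarrow> 'a set \<Rightarrow> nat \<Rightarrow> 'a set list list \<Rightarrow> 'a \<Rightarrow> real" where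
  "gam eps I w k q X Sstar 0 h = indicator Sstar"
| "gam eps I w k q X Sstar (Suc j) h =
     (\<lambda>i. if i \<in> remaining I (take (Suc j) h)
          then lam eps I w k q X (Suc j) h (gam eps I w k q X Sstar j h) i else 0)"

end

theory Submission
  imports Defs
begin

text \<open>Conditioned on the first \<open>j - 1\<close> rounds, an item \<open>i \<in> S\<^sub>j\<^sub>-\<^sub>1\<close> survives round \<open>j\<close>
  iff none of the \<open>q\<close> independent samples contains it, which happens with probability
  \<open>(1 - cover\<^sub>i(x\<^sup>j) / \<parallel>x\<^sup>j\<parallel>)\<^sup>q \<ge> 1 - q / \<parallel>x\<^sup>j\<parallel>\<close> by Bernoulli's inequality. Since
  \<open>cover\<^sub>i \<le> 1\<close>, \<open>\<parallel>x\<^sup>j\<parallel> = m (1 - (j - 1)\<epsilon>)\<close> and \<open>q = \<epsilon> m\<close>, this lower bound is exactly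
  \<open>(1 - j\<epsilon>) / (1 - (j - 1)\<epsilon>)\<close>, so the factor by which \<open>\<lambda>\<^sup>j\<close> rescales \<open>\<gamma>\<^sup>j\<^sup>-\<^sup>1\<close> is at most 1,
  and \<open>\<gamma>\<^sup>j \<le> 1\<close> follows by induction from \<open>\<gamma>\<^sup>0 = \<one>\<^sub>S\<^sub>*\<close>.\<close>

lemma emeasure_iid_samples_all:
  "emeasure (measure_pmf (iid_samples n p)) {Rs. \<forall>R\<in>set Rs. P R}
     = ennreal (measure_pmf.prob p {R. P R} ^ n)"
proof (induction n)
  case 0
  then show ?case by (simp add: measure_pmf.emeasure_eq_measure)
next
  case (Suc n)
  let ?A = "{Rs. \<forall>R\<in>set Rs. P R}" and ?p = "measure_pmf.prob p {R. P R}"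
  have cons: "emeasure (measure_pmf (map_pmf ((#) R) (iid_samples n p))) ?A
      = indicator {R. P R} R * ennreal (?p ^ n)" for R
  proof (cases "P R")
    case True
    then have "(#) R -` ?A = ?A" by auto
    then show ?thesis using True Suc by (simp add: emeasure_map_pmf)
  next
    case False
    then have "(#) R -` ?A = {}" by auto
    then show ?thesis using False by (simp add: emeasure_map_pmf)
  qed
  have "emeasure (measure_pmf (iid_samples (Suc n) p)) ?A
      = (\<integral>\<^sup>+R. emeasure (measure_pmf (map_pmf ((#) R) (iid_samples n p))) ?A \<partial>measure_pmf p)"
    by (simp only: iid_samples.simps emeasure_bind_pmf)
  also have "\<dots> = (\<integral>\<^sup>+R. indicator {R. P R} R * ennreal (?p ^ n) \<partial>measure_pmf p)"
    by (simp only: cons)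
  also have "\<dots> = emeasure (measure_pmf p) {R. P R} * ennreal (?p ^ n)"
    by (simp add: nn_integral_multc)
  also have "\<dots> = ennreal (?p ^ Suc n)"
    by (simp add: measure_pmf.emeasure_eq_measure ennreal_mult' mult.commute)
  finally show ?case .
qed

lemma prob_iid_samples_all:
  "measure_pmf.prob (iid_samples n p) {Rs. \<forall>R\<in>set Rs. P R} = measure_pmf.prob p {R. P R} ^ n"
  using emeasure_iid_samples_all[of n p P] by (simp add: measure_pmf.emeasure_eq_measure)

lemma finite_configs: "finite I \<Longrightarrow> finite (configs I w k)"
  by (rule finite_subset[of _ "Pow I"]) (auto simp: configs_def is_config_def)

lemma
  assumes "finite I" and "is_frac_solution I w k x" and "fnorm I w k x > 0"
  shows pmf_config_pmf: "pmf (config_pmf I w k x) C = x C / fnorm I w k x"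
    and set_pmf_config_pmf: "set_pmf (config_pmf I w k x) \<subseteq> configs I w k"
proof -
  define f where "f C = x C / fnorm I w k x" for C
  have nonneg: "0 \<le> f C" for C
    using assms(2,3) by (auto simp: f_def is_frac_solution_def)
  have zero: "f C = 0" if "C \<notin> configs I w k" for C
    using assms(2) that by (auto simp: f_def is_frac_solution_def)
  have "(\<integral>\<^sup>+C. ennreal (f C) \<partial>count_space UNIV) = (\<Sum>C\<in>configs I w k. ennreal (f C))"
    by (rule nn_integral_count_space'[OF finite_configs[OF assms(1)]]) (auto simp: zero)
  also have "\<dots> = ennreal (\<Sum>C\<in>configs I w k. f C)"
    using nonneg by (simp add: sum_ennreal)
  also have "(\<Sum>C\<in>configs I w k. f C) = 1"
    using assms(3) by (simp add: f_def sum_divide_distrib[symmetric] fnorm_def[symmetric])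
  finally have total: "(\<integral>\<^sup>+C. ennreal (f C) \<partial>count_space UNIV) = 1" by simp
  have def: "config_pmf I w k x = embed_pmf f"
    by (simp add: config_pmf_def f_def[abs_def])
  show "pmf (config_pmf I w k x) C = x C / fnorm I w k x"
    unfolding def pmf_embed_pmf[OF nonneg total] f_def ..
  show "set_pmf (config_pmf I w k x) \<subseteq> configs I w k"
    unfolding def set_embed_pmf[OF nonneg total] using zero by auto
qed

lemma prob_config_pmf_avoids:
  assumes finI: "finite I" and frac: "is_frac_solution I w k x" and norm: "fnorm I w k x > 0"
  shows "measure_pmf.prob (config_pmf I w k x) {C. i \<notin> C} = 1 - cover I w k x i / fnorm I w k x"
proof -
  let ?p = "config_pmf I w k x"
  have "measure_pmf.prob ?p {C. i \<in> C} = measure_pmf.prob ?p {C \<in> configs I w k. i \<in> C}"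
    using set_pmf_config_pmf[OF assms]
    by (intro measure_eq_AE AE_pmfI) auto
  also have "\<dots> = (\<Sum>C\<in>{C \<in> configs I w k. i \<in> C}. x C / fnorm I w k x)"
    using finite_configs[OF finI]
    by (simp add: measure_measure_pmf_finite pmf_config_pmf[OF assms])
  also have "\<dots> = cover I w k x i / fnorm I w k x"
    by (simp add: cover_def sum_divide_distrib)
  finally have "measure_pmf.prob ?p {C. i \<in> C} = cover I w k x i / fnorm I w k x" .
  moreover have "{C. i \<notin> C} = space (measure_pmf ?p) - {C. i \<in> C}" by auto
  ultimately show ?thesis
    using measure_pmf.prob_compl[of "{C. i \<in> C}" ?p] by simp
qed

lemma surv_prob_eq_power:
  assumes finI: "finite I"
    and feasible: "LP_feasible I w k (remaining I (take (j - 1) h)) M (X (take (j - 1) h))"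
    and M: "M > 0" and i: "i \<in> remaining I (take (j - 1) h)"
  shows "surv_prob I w k q X j h i = (1 - cover I w k (X (take (j - 1) h)) i / M) ^ q"
proof -
  have frac: "is_frac_solution I w k (X (take (j - 1) h))"
    and norm: "fnorm I w k (X (take (j - 1) h)) = M"
    using feasible by (auto simp: LP_feasible_def feasible_frac_def)
  have "{Rs. i \<in> remaining I (take (j - 1) h) - \<Union>(set Rs)} = {Rs. \<forall>R\<in>set Rs. i \<notin> R}"
    using i by auto
  then have "surv_prob I w k q X j h i = measure_pmf.prob
      (iid_samples q (config_pmf I w k (X (take (j - 1) h)))) {Rs. \<forall>R\<in>set Rs. i \<notin> R}"
    unfolding surv_prob_def by (simp only:)
  also have "\<dots> = (1 - cover I w k (X (take (j - 1) h)) i / M) ^ q"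
    using M by (simp only: prob_iid_samples_all prob_config_pmf_avoids[OF finI frac] norm)
  finally show ?thesis .
qed

lemma one_minus_div_le_power:
  fixes c M :: real
  assumes "0 \<le> c" "c \<le> 1" "c \<le> M"
  shows "1 - real q / M \<le> (1 - c / M) ^ q"
proof (cases "M = 0")
  case False
  then have M: "M > 0" using assms by linarith
  have "real q * c \<le> real q"
    using assms(2) by (simp add: mult_left_le)
  then have "1 - real q / M \<le> 1 + real q * (- (c / M))"
    using M by (simp add: divide_right_mono)
  also have "\<dots> \<le> (1 - c / M) ^ q"
    using Bernoulli_inequality[of "- (c / M)" q] M assms(3) by simp
  finally show ?thesis .
qed simp

lemma mult_le_one_minus_if_le_inverse_minus_one:
  fixes x eps :: real
  assumes "0 < eps" "x \<le> 1 / eps - 1"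
  shows "x * eps \<le> 1 - eps"
proof -
  have "(1 / eps - 1) * eps = 1 - eps" using assms(1) by (simp add: field_simps)
  then show ?thesis using mult_right_mono[OF assms(2), of eps] assms(1) by simp
qed

lemma lam_factor_pos:
  assumes "0 < eps" "real j \<le> 1 / eps - 1"
  shows "0 < (1 - real j * eps) / (1 - (real j - 1) * eps)"
  using mult_le_one_minus_if_le_inverse_minus_one[OF assms] assms(1) by (simp add: algebra_simps)

lemma lam_factor_le_surv_prob:
  assumes finI: "finite I" and m: "m > 0" and eps: "0 < eps" and q: "real q = eps * real m"
    and j: "1 \<le> j" "real j \<le> 1 / eps - 1"
    and i: "i \<in> remaining I (take (j - 1) h)"
    and feasible: "LP_feasible I w k (remaining I (take (j - 1) h))
        (real m * (1 - real (j - 1) * eps)) (X (take (j - 1) h))"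
  shows "(1 - real j * eps) / (1 - (real j - 1) * eps) \<le> surv_prob I w k q X j h i"
proof -
  define M where "M = real m * (1 - (real j - 1) * eps)"
  have pos: "1 - (real j - 1) * eps \<ge> 2 * eps"
    using mult_le_one_minus_if_le_inverse_minus_one[OF eps j(2)] by (simp add: algebra_simps)
  have "M \<ge> 2 * real q"
    using mult_left_mono[OF pos, of "real m"] q by (simp add: M_def algebra_simps)
  moreover have "real q > 0"
    using q eps m by simp
  then have "q \<ge> 1" by simp
  ultimately have M: "M \<ge> 1" by linarith
  have "real q / M = eps / (1 - (real j - 1) * eps)"
    using m by (simp add: M_def q)
  then have factor: "(1 - real j * eps) / (1 - (real j - 1) * eps) = 1 - real q / M"
    using pos eps by (simp add: field_simps)
  define x where "x = X (take (j - 1) h)"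
  have "is_frac_solution I w k x" "cover I w k x i \<le> 1"
    using feasible i by (auto simp: x_def LP_feasible_def feasible_frac_def remaining_def)
  then have "0 \<le> cover I w k x i" "cover I w k x i \<le> M"
    using M by (auto simp: cover_def is_frac_solution_def intro!: sum_nonneg)
  then have "1 - real q / M \<le> (1 - cover I w k x i / M) ^ q"
    using \<open>cover I w k x i \<le> 1\<close> by (intro one_minus_div_le_power)
  also have "\<dots> = surv_prob I w k q X j h i"
  proof -
    have "LP_feasible I w k (remaining I (take (j - 1) h)) M (X (take (j - 1) h))"
      using feasible j(1) by (simp add: M_def of_nat_diff)
    from surv_prob_eq_power[where X = X, OF finI this _ i] M show ?thesis
      by (simp add: x_def)
  qed
  finally show ?thesis unfolding factor .
qed

lemma lam_le_one:
  assumes finI: "finite I" and m: "m > 0" and eps: "0 < eps" and q: "real q = eps * real m"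
    and j: "1 \<le> j" "real j \<le> 1 / eps - 1"
    and feasible: "LP_feasible I w k (remaining I (take (j - 1) h))
        (real m * (1 - real (j - 1) * eps)) (X (take (j - 1) h))"
    and g: "\<And>i. g i \<le> 1"
  shows "lam eps I w k q X j h g i \<le> 1"
proof (cases "i \<in> remaining I (take (j - 1) h)")
  case True
  define a where "a = (1 - real j * eps) / (1 - (real j - 1) * eps)"
  define P where "P = surv_prob I w k q X j h i"
  have "0 < a"
    using lam_factor_pos[OF eps j(2)] by (simp add: a_def)
  moreover have "a \<le> P"
    using lam_factor_le_surv_prob[where X = X, OF finI m eps q j True feasible]
    by (simp add: a_def P_def)
  ultimately have "0 \<le> a * (1 / P)" "a * (1 / P) \<le> 1" by simp_all
  then have "a * (1 / P) * g i \<le> 1"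
    using g[of i] by (smt (verit) mult_left_le mult_nonneg_nonpos)
  then show ?thesis
    using True by (simp add: lam_def a_def P_def)
qed (simp add: lam_def)

lemma gam_le_one:
  assumes lam: "\<And>j' g i. 1 \<le> j' \<Longrightarrow> j' \<le> j \<Longrightarrow> (\<And>i. g i \<le> 1) \<Longrightarrow>
      lam eps I w k q X j' h g i \<le> 1"
    and "j' \<le> j"
  shows "gam eps I w k q X Sstar j' h i \<le> 1"
  using \<open>j' \<le> j\<close>
proof (induction j' arbitrary: i)
  case (Suc j')
  then have "lam eps I w k q X (Suc j') h (gam eps I w k q X Sstar j' h) i \<le> 1"
    by (intro lam) auto
  then show ?case by simp
qed (simp add: indicator_def)

theorem lemma4p6:
  fixes I :: "'a set" and w v :: "'a \<Rightarrow> real" and m k q :: nat and eps :: real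
    and X :: "'a set list list \<Rightarrow> 'a set \<Rightarrow> real"
    and Cstar :: "'a set list"
  assumes finI: "finite I"
    and w01: "\<forall>i\<in>I. 0 \<le> w i \<and> w i \<le> 1"
    and vnn: "\<forall>i\<in>I. 0 \<le> v i"
    and mpos: "m > 0" and kpos: "k > 0"
    and eps: "0 < eps" "eps < 0.1"
    and eps_sqrt: "\<exists>n::nat. sqrt (1 / eps) = real n"
    and simple_m: "real m > exp (exp (eps powr (-30)))"
    and simple_q: "real q = eps * real m"
    and rule: "\<forall>hist. real (length hist) < 1 / eps \<longrightarrow>
        LP_approx eps I w v k (remaining I hist)
          (real m * (1 - real (length hist) * eps)) (X hist)"
    and opt: "is_optimal_solution I w v m k Cstar"
    and j: "1 \<le> j" "real j \<le> 1 / eps - 1"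
    and h: "length h = j" "reachable X q h"
    and iI: "i \<in> I"
  shows "lam eps I w k q X j h (gam eps I w k q X (\<Union>(set Cstar)) (j - 1) h) i \<le> 1
       \<and> gam eps I w k q X (\<Union>(set Cstar)) j h i \<le> 1"
proof -
  have lam_bound: "lam eps I w k q X j' h g i' \<le> 1"
    if "1 \<le> j'" "j' \<le> j" "\<And>i. g i \<le> 1" for j' g i'
  proof (rule lam_le_one[OF finI mpos eps(1) simple_q \<open>1 \<le> j'\<close>])
    show "real j' \<le> 1 / eps - 1" using that(2) j(2) by linarith
    have length: "length (take (j' - 1) h) = j' - 1" using h(1) that(2) by simp
    then have early: "real (length (take (j' - 1) h)) < 1 / eps" using j(2) that(2) by linarith
    show "LP_feasible I w k (remaining I (take (j' - 1) h))
        (real m * (1 - real (j' - 1) * eps)) (X (take (j' - 1) h))"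
      using rule[rule_format, OF early] unfolding LP_approx_def length by blast
  qed (use that in auto)
  have "\<And>i'. gam eps I w k q X (\<Union>(set Cstar)) (j - 1) h i' \<le> 1"
    by (rule gam_le_one[OF lam_bound]) auto
  then show ?thesis
    using lam_bound[OF j(1) order_refl] gam_le_one[OF lam_bound order_refl] by blast
qed

end
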